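(* Let $C\subseteq\mathbb{R}^{n+1}$ be a proper open cone with base-point $b\in C$, let $S,T\in\mathcal T(C)\setminus\{C\}$, $p\in S$, $q\in T$, and suppose $f_{S,p}|_C$ and $f_{T,q}|_C$ are Busemann points of the Funk geometry on $C$. If $(z_k)_k$ is a sequence in $C$ that is an almost-geodesic with respect to the Funk metric $\mathcal F_C$ and converges to $f_{S,p}|_C$ in the Funk sense, then \[\lim_{k\to\infty}\big(\mathcal F_C(b,z_k)+f_{T,q}(z_k)\big)=\inf_{(x_k)_k}\liminf_{k\to\infty}\big(\mathcal F_C(b,x_k)+f_{T,q}(x_k)\big),\] where the infimum is taken over all sequences $(x_k)_k$ in $C$ converging to $f_{S,p}|_C$ in the Funk sense on $C$.
   Context: An open cone is a nonempty open convex $C$ with $\lambda C\subseteq C$ for $\lambda>0$; proper means $\overline C\cap(-\overline C)=\{0\}$. For an open cone $K$, $y\in K$, $x\in\mathbb{R}^{n+1}$: $M(x/y;K)=\inf\{\lambda>0\colon\lambda y-x\in\overline K\}$ and $\mathcal F_K(x,y)=\log M(x/y;K)$ (Funk metric). For $z\in\partial C$, $\tau(C,z)=\{\lambda(w-z)\colon\lambda>0,w\in C\}$; $\Gamma(\Pi)=\{\tau(T,z)\colon T\in\Pi,z\in\partial T\}$; $\mathcal T(C)=\bigcup_{k=1}^n\Gamma^k(\{C\})$ (all contain $C$). For $T\in\mathcal T(C)\cup\{C\}$ and $p\in T$, $f_{T,p}(w)=\mathcal F_T(w,p)-\mathcal F_T(b,p)$. A sequence $(x_k)$ in $C$ converges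 to $f$ in the Funk sense on $C$ if $f_{C,x_k}\to f$ pointwise on $C$. $f$ is a Busemann point of the Funk geometry on $C$ if some Funk $\epsilon$-almost-geodesic $(x_k)$ in $C$ (i.e. $\sum_{i=0}^m\mathcal F_C(x_i,x_{i+1})\leq\mathcal F_C(x_0,x_{m+1})+\epsilon$ for all $m$, some $\epsilon>0$) converges to $f$ in the Funk sense and $f$ is not of the form $\mathcal F_C(\cdot,p)-\mathcal F_C(b,p)$, $p\in C$. A sequence $(z_k)$ is an almost-geodesic with respect to $\mathcal F_C$ if there are reals $0=t_0<t_1<\cdots\to\infty$ such that for every $\epsilon>0$ there is $N$ with $|\mathcal F_C(z_0,z_j)+\mathcal F_C(z_j,z_k)-t_k|<\epsilon$ for all $k\geq j\geq N$. *)

theory Defs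
  imports "HOL-Analysis.Analysis"
begin

definition open_cone :: "'a::euclidean_space set \<Rightarrow> bool" where
  "open_cone C \<longleftrightarrow> C \<noteq> {} \<and> open C \<and> convex C \<and>
     (\<forall>l::real. \<forall>x\<in>C. l > 0 \<longrightarrow> l *\<^sub>R x \<in> C)"

definition proper_open_cone :: "'a::euclidean_space set \<Rightarrow> bool" where
  "proper_open_cone C \<longleftrightarrow> open_cone C \<and> closure C \<inter> uminus ` closure C = {0}"

definition funk_M :: "'a::euclidean_space set \<Rightarrow> 'a \<Rightarrow> 'a \<Rightarrow> real" where
  "funk_M K x y = Inf {l::real. l > 0 \<and> l *\<^sub>R y - x \<in> closure K}"

definition funk :: "'a::euclidean_space set \<Rightarrow> 'a \<Rightarrow> 'a \<Rightarrow> real" where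
  "funk K x y = ln (funk_M K x y)"

definition tau :: "'a::euclidean_space set \<Rightarrow> 'a \<Rightarrow> 'a set" where
  "tau C z = {l *\<^sub>R (w - z) | l w. l > 0 \<and> w \<in> C}"

definition Gamma :: "'a::euclidean_space set set \<Rightarrow> 'a set set" where
  "Gamma P = {tau T z | T z. T \<in> P \<and> z \<in> frontier T}"

text \<open>\<T>(C) = union of Gamma^k({C}) for k = 1..n, where the ambient space is R^(n+1)\<close>
definition tangent_cones :: "'a::euclidean_space set \<Rightarrow> 'a set set" where
  "tangent_cones C = (\<Union>k\<in>{1..DIM('a) - 1}. (Gamma ^^ k) {C})"

definition funk_f :: "'a::euclidean_space \<Rightarrow> 'a set \<Rightarrow> 'a \<Rightarrow> 'a \<Rightarrow> real" where
  "funk_f b T p w = funk T w p - funk T b p"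

definition funk_converges ::
  "'a::euclidean_space set \<Rightarrow> 'a \<Rightarrow> (nat \<Rightarrow> 'a) \<Rightarrow> ('a \<Rightarrow> real) \<Rightarrow> bool" where
  "funk_converges C b x f \<longleftrightarrow> (\<forall>w\<in>C. (\<lambda>k. funk_f b C (x k) w) \<longlonglongrightarrow> f w)"

definition funk_eps_almost_geodesic ::
  "'a::euclidean_space set \<Rightarrow> real \<Rightarrow> (nat \<Rightarrow> 'a) \<Rightarrow> bool" where
  "funk_eps_almost_geodesic C \<epsilon> x \<longleftrightarrow>
     (\<forall>m. (\<Sum>i\<le>m. funk C (x i) (x (Suc i))) \<le> funk C (x 0) (x (Suc m)) + \<epsilon>)"

text \<open>Busemann point; only the values of f on C matter (f stands for its restriction to C)\<close>
definition funk_busemann :: "'a::euclidean_space set \<Rightarrow> 'a \<Rightarrow> ('a \<Rightarrow> real) \<Rightarrow> bool" where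
  "funk_busemann C b f \<longleftrightarrow>
     (\<exists>x \<epsilon>. \<epsilon> > 0 \<and> (\<forall>k. x k \<in> C) \<and> funk_eps_almost_geodesic C \<epsilon> x \<and> funk_converges C b x f) \<and>
     \<not> (\<exists>p\<in>C. \<forall>w\<in>C. f w = funk C w p - funk C b p)"

definition funk_almost_geodesic :: "'a::euclidean_space set \<Rightarrow> (nat \<Rightarrow> 'a) \<Rightarrow> bool" where
  "funk_almost_geodesic C z \<longleftrightarrow>
     (\<exists>t::nat \<Rightarrow> real. t 0 = 0 \<and> strict_mono t \<and> filterlim t at_top sequentially \<and>
        (\<forall>\<epsilon>>0. \<exists>N. \<forall>j k. N \<le> j \<and> j \<le> k \<longrightarrow>
           \<bar>funk C (z 0) (z j) + funk C (z j) (z k) - t k\<bar> < \<epsilon>))"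

end

theory Submission imports Defs begin

text \<open>Put \<open>\<xi> = f\<^bsub>S,p\<^esub>\<close> and \<open>\<eta> = f\<^bsub>T,q\<^esub>\<close>, and let \<open>L = sup\<^bsub>y\<in>C\<^esub> (\<eta> y - \<xi> y)\<close>.
  Every Funk limit satisfies \<open>\<eta> y \<le> \<F>(y,x) + \<eta> x\<close>, by the triangle inequality; for a sequence
  \<open>x\<^sub>k \<rightarrow> \<xi>\<close> this gives \<open>\<eta> y - \<xi> y \<le> liminf (\<F>(b,x\<^sub>k) + \<eta> x\<^sub>k)\<close>, so the infimum is at least \<open>L\<close>.
  Along the almost-geodesic \<open>z\<close>, the distances from \<open>z\<^sub>0\<close> are almost additive, which forces
  \<open>limsup (\<F>(b,z\<^sub>j) + \<xi> z\<^sub>j) \<le> 0\<close>; hence \<open>limsup (\<F>(b,z\<^sub>k) + \<eta> z\<^sub>k) \<le> L\<close>, and \<open>z\<close> itself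
  is one of the competing sequences.\<close>

lemma open_cone_convex_cone_closure:
  assumes "open_cone C"
  shows "convex_cone (closure C)"
proof -
  from assms obtain x where x: "x \<in> C" unfolding open_cone_def by auto
  have "(\<lambda>n. inverse (real (Suc n)) *\<^sub>R x) \<longlonglongrightarrow> 0"
    using tendsto_scaleR[OF LIMSEQ_inverse_real_of_nat tendsto_const] by simp
  moreover have "inverse (real (Suc n)) *\<^sub>R x \<in> C" for n
    using assms x unfolding open_cone_def by simp
  ultimately have zero: "0 \<in> closure C"
    unfolding closure_sequential by (auto intro!: exI[of _ "\<lambda>n. inverse (real (Suc n)) *\<^sub>R x"])
  have "conic (insert 0 C)"
    using assms unfolding open_cone_def conic_def by (metis insertCI insertE order_le_less scaleR_eq_0_iff)
  then have "conic (closure C)"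
    using conic_closure closure_insert zero by (metis insert_absorb)
  then show ?thesis
    using assms zero convex_closure unfolding convex_cone_def open_cone_def by auto
qed

lemma proper_open_cone_neg_notin_closure:
  assumes "proper_open_cone C" "x \<in> C"
  shows "- x \<notin> closure C"
proof
  assume neg: "- x \<in> closure C"
  have "open C"
    using assms unfolding proper_open_cone_def open_cone_def by auto
  have "x \<in> closure C \<inter> uminus ` closure C"
    using assms(2) neg closure_subset by (auto intro!: image_eqI[of x uminus "- x"])
  then have "x = 0"
    using assms(1) unfolding proper_open_cone_def by auto
  then obtain e where "e > 0" "ball 0 e \<subseteq> C"
    using assms(2) \<open>open C\<close> open_contains_ball by blast
  moreover obtain i :: 'a where "i \<in> Basis"
    using nonempty_Basis by blast
  ultimately have "(e/2) *\<^sub>R i \<in> C" "- ((e/2) *\<^sub>R i) \<in> C"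
    by auto
  then have "(e/2) *\<^sub>R i \<in> closure C \<inter> uminus ` closure C"
    using closure_subset by (auto intro!: image_eqI[of _ uminus "- ((e/2) *\<^sub>R i)"])
  then show False
    using assms(1) \<open>e > 0\<close> \<open>i \<in> Basis\<close> unfolding proper_open_cone_def by auto
qed

lemma funk_M_set_nonempty:
  assumes "open_cone C" "y \<in> C"
  shows "\<exists>l>0. l *\<^sub>R y - x \<in> closure C"
proof -
  obtain e where e: "e > 0" "ball y e \<subseteq> C"
    using assms open_contains_ball unfolding open_cone_def by blast
  define l where "l = (norm x + 1) / e"
  have l: "l > 0"
    using e unfolding l_def by (simp add: add_nonneg_pos)
  have "dist y (y - (1/l) *\<^sub>R x) = norm x / l"
    using l by (simp add: dist_norm)
  also have "\<dots> < e"
    using e l unfolding l_def by (simp add: field_simps)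
  finally have "y - (1/l) *\<^sub>R x \<in> C"
    using e by auto
  then have "l *\<^sub>R (y - (1/l) *\<^sub>R x) \<in> C"
    using assms(1) l unfolding open_cone_def by blast
  then have "l *\<^sub>R y - x \<in> C"
    using l by (simp add: scaleR_right_diff_distrib)
  then show ?thesis
    using l closure_subset by blast
qed

lemma funk_M_pos:
  assumes "proper_open_cone C" "x \<in> C" "y \<in> C"
  shows "funk_M C x y > 0"
proof (rule ccontr)
  assume "\<not> funk_M C x y > 0"
  then have M0: "Inf {l. l > 0 \<and> l *\<^sub>R y - x \<in> closure C} \<le> 0"
    unfolding funk_M_def by simp
  have oc: "open_cone C"
    using assms unfolding proper_open_cone_def by auto
  have "- x \<in> closure (closure C)"
    unfolding closure_approachable
  proof (intro allI impI)
    fix e :: real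
    assume "e > 0"
    then have "Inf {l. l > 0 \<and> l *\<^sub>R y - x \<in> closure C} < e / (norm y + 1)"
      using M0 by (smt (verit) divide_pos_pos norm_ge_zero)
    then obtain l where l: "l > 0" "l *\<^sub>R y - x \<in> closure C" "l < e / (norm y + 1)"
      using cInf_lessD funk_M_set_nonempty[OF oc assms(3)] by (metis (no_types, lifting) empty_Collect_eq mem_Collect_eq)
    have "dist (l *\<^sub>R y - x) (- x) = l * norm y"
      using l by (simp add: dist_norm)
    also have "\<dots> < e"
      using l by (simp add: pos_less_divide_eq add_nonneg_pos) (smt (verit) mult_left_mono norm_ge_zero)
    finally show "\<exists>v\<in>closure C. dist v (- x) < e"
      using l by blast
  qed
  then show False
    using proper_open_cone_neg_notin_closure[OF assms(1,2)] by simp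
qed

lemma funk_M_self:
  assumes "proper_open_cone C" "x \<in> C"
  shows "funk_M C x x = 1"
  unfolding funk_M_def
proof (rule cInf_eq_minimum)
  have cc: "convex_cone (closure C)"
    using assms open_cone_convex_cone_closure unfolding proper_open_cone_def by blast
  then show "1 \<in> {l. l > 0 \<and> l *\<^sub>R x - x \<in> closure C}"
    by (simp add: convex_cone_iff)
  fix l
  assume l: "l \<in> {l. l > 0 \<and> l *\<^sub>R x - x \<in> closure C}"
  show "1 \<le> l"
  proof (rule ccontr)
    assume "\<not> 1 \<le> l"
    then have "(1 / (1 - l)) *\<^sub>R (l *\<^sub>R x - x) \<in> closure C"
      using l cc by (intro convex_cone_scaleR) auto
    moreover have "(1 / (1 - l)) *\<^sub>R (l *\<^sub>R x - x) = - x"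
    proof -
      have "(1 / (1 - l)) * (l - 1) = - 1"
        using \<open>\<not> 1 \<le> l\<close> by (simp add: field_simps)
      moreover have "l *\<^sub>R x - x = (l - 1) *\<^sub>R x"
        by (simp add: scaleR_diff_left)
      ultimately show ?thesis
        by (simp only: scaleR_scaleR) simp
    qed
    ultimately show False
      using proper_open_cone_neg_notin_closure[OF assms] by simp
  qed
qed

lemma funk_self:
  assumes "proper_open_cone C" "x \<in> C"
  shows "funk C x x = 0"
  using funk_M_self[OF assms] unfolding funk_def by simp

lemma funk_M_submult:
  assumes "proper_open_cone C" "x \<in> C" "y \<in> C" "w \<in> C"
  shows "funk_M C y w \<le> funk_M C y x * funk_M C x w"
proof -
  have oc: "open_cone C" and cc: "convex_cone (closure C)"
    using assms open_cone_convex_cone_closure unfolding proper_open_cone_def by auto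
  define A where "A = {l. l > 0 \<and> l *\<^sub>R x - y \<in> closure C}"
  define B where "B = {l. l > 0 \<and> l *\<^sub>R w - x \<in> closure C}"
  define D where "D = {l. l > 0 \<and> l *\<^sub>R w - y \<in> closure C}"
  have M: "funk_M C y x = Inf A" "funk_M C x w = Inf B" "funk_M C y w = Inf D"
    unfolding funk_M_def A_def B_def D_def by auto
  have A: "A \<noteq> {}" "Inf A > 0"
    using funk_M_set_nonempty[OF oc assms(2)] funk_M_pos[OF assms(1,3,2)] M
    unfolding A_def by auto
  have B: "B \<noteq> {}"
    using funk_M_set_nonempty[OF oc assms(4)] unfolding B_def by auto
  have D_le: "Inf D \<le> a * b" if a: "a \<in> A" and b: "b \<in> B" for a b
  proof (rule cInf_lower)
    have "a *\<^sub>R (b *\<^sub>R w - x) + (a *\<^sub>R x - y) \<in> closure C"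
      using a b convex_cone_add[OF cc convex_cone_scaleR[OF cc]] unfolding A_def B_def by simp
    then show "a * b \<in> D"
      using a b unfolding A_def B_def D_def by (simp add: algebra_simps)
    show "bdd_below D"
      unfolding D_def by (rule bdd_belowI[of _ 0]) auto
  qed
  have "Inf D / Inf A \<le> b" if b: "b \<in> B" for b
  proof -
    have "b > 0"
      using b unfolding B_def by auto
    have "Inf D / b \<le> Inf A"
      using A D_le[OF _ b] \<open>b > 0\<close>
      by (intro cInf_greatest) (auto simp: pos_divide_le_eq mult.commute)
    then show ?thesis
      using \<open>b > 0\<close> A by (simp add: field_simps)
  qed
  then have "Inf D / Inf A \<le> Inf B"
    using B by (intro cInf_greatest) auto
  then show ?thesis
    using A M by (simp add: field_simps)
qed

lemma funk_triangle:
  assumes "proper_open_cone C" "x \<in> C" "y \<in> C" "w \<in> C"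
  shows "funk C y w \<le> funk C y x + funk C x w"
proof -
  have "funk C y w \<le> ln (funk_M C y x * funk_M C x w)"
    unfolding funk_def using funk_M_submult[OF assms] funk_M_pos[OF assms(1,3,4)] by (rule ln_mono)
  also have "\<dots> = funk C y x + funk C x w"
    unfolding funk_def using funk_M_pos[OF assms(1,3,2)] funk_M_pos[OF assms(1,2,4)] by (simp add: ln_mult)
  finally show ?thesis .
qed

lemma funk_converges_le_funk_add:
  assumes "proper_open_cone C" "\<forall>k. s k \<in> C" "funk_converges C b s f" "x \<in> C" "y \<in> C"
  shows "f y \<le> funk C y x + f x"
proof -
  have "(\<lambda>k. funk_f b C (s k) y - funk_f b C (s k) x) \<longlonglongrightarrow> f y - f x"
    using assms(3-5) unfolding funk_converges_def by (intro tendsto_diff) auto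
  moreover have "funk_f b C (s k) y - funk_f b C (s k) x \<le> funk C y x" for k
    using funk_triangle[OF assms(1,4,5) assms(2)[rule_format, of k]] unfolding funk_f_def by simp
  ultimately have "f y - f x \<le> funk C y x"
    by (intro LIMSEQ_le_const2) auto
  then show ?thesis
    by simp
qed

lemma SUP_diff_le_liminf_funk_add:
  assumes eta: "\<forall>x\<in>C. \<forall>y\<in>C. \<eta> y \<le> funk C y x + \<eta> x"
    and x: "\<forall>k. x k \<in> C" "funk_converges C b x \<xi>"
  shows "(SUP y\<in>C. ereal (\<eta> y - \<xi> y)) \<le> liminf (\<lambda>k. ereal (funk C b (x k) + \<eta> (x k)))"
proof (rule SUP_least)
  fix y
  assume y: "y \<in> C"
  have "(\<lambda>k. ereal (\<eta> y - funk_f b C (x k) y)) \<longlonglongrightarrow> ereal (\<eta> y - \<xi> y)"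
    using x(2) y unfolding funk_converges_def by (intro tendsto_intros) auto
  then have "liminf (\<lambda>k. ereal (\<eta> y - funk_f b C (x k) y)) = ereal (\<eta> y - \<xi> y)"
    by (intro lim_imp_Liminf) auto
  moreover have "liminf (\<lambda>k. ereal (\<eta> y - funk_f b C (x k) y))
      \<le> liminf (\<lambda>k. ereal (funk C b (x k) + \<eta> (x k)))"
    using eta x(1) y unfolding funk_f_def
    by (intro Liminf_mono always_eventually allI) (simp add: algebra_simps)
  ultimately show "ereal (\<eta> y - \<xi> y) \<le> liminf (\<lambda>k. ereal (funk C b (x k) + \<eta> (x k)))"
    by simp
qed

lemma funk_almost_geodesic_almost_additive:
  assumes "proper_open_cone C" "\<forall>k. z k \<in> C" "funk_almost_geodesic C z" "e > 0"
  shows "\<exists>N. \<forall>j k. N \<le> j \<and> j \<le> k \<longrightarrow> funk C (z 0) (z j) + funk C (z j) (z k) \<le> funk C (z 0) (z k) + e"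
proof -
  obtain t where "\<forall>\<epsilon>>0. \<exists>N. \<forall>j k. N \<le> j \<and> j \<le> k \<longrightarrow>
      \<bar>funk C (z 0) (z j) + funk C (z j) (z k) - t k\<bar> < \<epsilon>"
    using assms(3) unfolding funk_almost_geodesic_def by blast
  then obtain N where N: "\<forall>j k. N \<le> j \<and> j \<le> k \<longrightarrow>
      \<bar>funk C (z 0) (z j) + funk C (z j) (z k) - t k\<bar> < e / 2"
    using assms(4) half_gt_zero by blast
  have "funk C (z 0) (z j) + funk C (z j) (z k) \<le> funk C (z 0) (z k) + e" if "N \<le> j" "j \<le> k" for j k
  proof -
    have "funk C (z k) (z k) = 0"
      using funk_self[OF assms(1)] assms(2) by blast
    then show ?thesis
      using N[rule_format, of j k, unfolded abs_less_iff] N[rule_format, of k k, unfolded abs_less_iff] that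
      by linarith
  qed
  then show ?thesis
    by blast
qed

lemma limsup_funk_add_almost_geodesic_le_0:
  assumes pc: "proper_open_cone C" and z: "\<forall>k. z k \<in> C" "funk_almost_geodesic C z"
    and conv: "funk_converges C b z \<xi>"
  shows "limsup (\<lambda>j. ereal (funk C b (z j) + \<xi> (z j))) \<le> 0"
proof (rule ereal_le_epsilon2)
  fix e :: real
  assume "e > 0"
  obtain N1 where N1: "\<forall>j k. N1 \<le> j \<and> j \<le> k \<longrightarrow>
      funk C (z 0) (z j) + funk C (z j) (z k) \<le> funk C (z 0) (z k) + e / 2"
    using funk_almost_geodesic_almost_additive[OF pc z, of "e/2"] \<open>e > 0\<close> by auto
  have \<xi>_le: "\<xi> (z j) - \<xi> (z 0) \<le> e / 2 - funk C (z 0) (z j)" if "N1 \<le> j" for j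
  proof (rule LIMSEQ_le_const2)
    show "(\<lambda>k. funk_f b C (z k) (z j) - funk_f b C (z k) (z 0)) \<longlonglongrightarrow> \<xi> (z j) - \<xi> (z 0)"
      using conv z(1) unfolding funk_converges_def by (intro tendsto_diff) auto
    show "\<exists>M. \<forall>k\<ge>M. funk_f b C (z k) (z j) - funk_f b C (z k) (z 0) \<le> e / 2 - funk C (z 0) (z j)"
      using N1 that unfolding funk_f_def by (intro exI[of _ j]) force
  qed
  obtain N2 where N2: "\<forall>j\<ge>N2. \<bar>funk_f b C (z j) (z 0) - \<xi> (z 0)\<bar> < e / 2"
    using conv z(1) \<open>e > 0\<close> half_gt_zero
    unfolding funk_converges_def lim_sequentially dist_real_def by blast
  have "funk C b (z j) + \<xi> (z j) \<le> e" if "max N1 N2 \<le> j" for j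
    using \<xi>_le[of j] N2[rule_format, of j, unfolded abs_less_iff funk_f_def] that by linarith
  then have "eventually (\<lambda>j. ereal (funk C b (z j) + \<xi> (z j)) \<le> 0 + ereal e) sequentially"
    unfolding eventually_sequentially by (intro exI[of _ "max N1 N2"]) auto
  then show "limsup (\<lambda>j. ereal (funk C b (z j) + \<xi> (z j))) \<le> 0 + ereal e"
    by (rule Limsup_bounded)
qed

lemma limsup_funk_add_almost_geodesic_le_SUP:
  assumes "proper_open_cone C" "\<forall>k. z k \<in> C" "funk_almost_geodesic C z"
    and "funk_converges C b z \<xi>"
  shows "limsup (\<lambda>j. ereal (funk C b (z j) + \<eta> (z j))) \<le> (SUP y\<in>C. ereal (\<eta> y - \<xi> y))"
proof -
  have split: "(\<lambda>j. ereal (funk C b (z j) + \<eta> (z j)))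
      = (\<lambda>j. ereal (funk C b (z j) + \<xi> (z j)) + ereal (\<eta> (z j) - \<xi> (z j)))"
    by auto
  have "limsup (\<lambda>j. ereal (funk C b (z j) + \<eta> (z j)))
      \<le> limsup (\<lambda>j. ereal (funk C b (z j) + \<xi> (z j))) + limsup (\<lambda>j. ereal (\<eta> (z j) - \<xi> (z j)))"
    unfolding split by (rule ereal_limsup_add_mono)
  also have "\<dots> \<le> 0 + (SUP y\<in>C. ereal (\<eta> y - \<xi> y))"
  proof (rule add_mono)
    show "limsup (\<lambda>j. ereal (funk C b (z j) + \<xi> (z j))) \<le> 0"
      using limsup_funk_add_almost_geodesic_le_0[OF assms] .
    show "limsup (\<lambda>j. ereal (\<eta> (z j) - \<xi> (z j))) \<le> (SUP y\<in>C. ereal (\<eta> y - \<xi> y))"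
      using assms(2) by (intro Limsup_bounded always_eventually allI SUP_upper) auto
  qed
  finally show ?thesis
    by simp
qed

theorem lemma4p7p2:
  fixes C S T :: "'a::euclidean_space set" and b p q :: 'a and z :: "nat \<Rightarrow> 'a"
  assumes "proper_open_cone C" and "b \<in> C"
    and "S \<in> tangent_cones C - {C}" and "T \<in> tangent_cones C - {C}"
    and "p \<in> S" and "q \<in> T"
    and "funk_busemann C b (funk_f b S p)" and "funk_busemann C b (funk_f b T q)"
    and "\<forall>k. z k \<in> C" and "funk_almost_geodesic C z"
    and "funk_converges C b z (funk_f b S p)"
  shows "(\<lambda>k. ereal (funk C b (z k) + funk_f b T q (z k))) \<longlonglongrightarrow>
    (INF x\<in>{x. (\<forall>k. x k \<in> C) \<and> funk_converges C b x (funk_f b S p)}.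
       liminf (\<lambda>k. ereal (funk C b (x k) + funk_f b T q (x k))))"
    (is "?g z \<longlonglongrightarrow> (INF x\<in>?X. liminf (?g x))")
proof -
  define L where "L = (SUP y\<in>C. ereal (funk_f b T q y - funk_f b S p y))"
  obtain s where s: "\<forall>k. s k \<in> C" "funk_converges C b s (funk_f b T q)"
    using assms(8) unfolding funk_busemann_def by auto
  have "\<forall>x\<in>C. \<forall>y\<in>C. funk_f b T q y \<le> funk C y x + funk_f b T q x"
    using funk_converges_le_funk_add[OF assms(1) s] by blast
  then have lower: "L \<le> (INF x\<in>?X. liminf (?g x))"
    unfolding L_def using SUP_diff_le_liminf_funk_add by (intro INF_greatest) blast
  have upper: "limsup (?g z) \<le> L"
    unfolding L_def using limsup_funk_add_almost_geodesic_le_SUP[OF assms(1,9-11)] .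
  have "(INF x\<in>?X. liminf (?g x)) \<le> liminf (?g z)"
    using assms(9,11) by (intro INF_lower) auto
  then show ?thesis
    using lower upper Liminf_le_Limsup[of sequentially "?g z"]
    by (subst tendsto_iff_Liminf_eq_Limsup) auto
qed

end
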